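(* Let $N\ge0$, $m\ge1$, $A_0,\dots,A_N\in\mathbb{C}^{n\times n}$. Then $$\mathcal{F}(L_m)\subset\Big\{z\in\mathbb{C}:\ d(\mathcal{F}(A_0),z)\le\sum_{\ell=1}^N\|A_\ell\|\Big\}.$$
   Context: $\|\cdot\|$ is the spectral norm. For $B\in\mathbb{C}^{k\times k}$, $\mathcal{F}(B)=\{x^*Bx:x\in\mathbb{C}^k,\|x\|=1\}$ is the field of values; $d(\mathcal{S},z)$ is the distance from the point $z$ to the closed set $\mathcal{S}$. $L_m\in\mathbb{C}^{mn\times mn}$ is the lower block-triangular block-Toeplitz matrix with $n\times n$ blocks whose $(r,s)$ block equals $A_{r-s}$ if $0\le r-s\le\min(m-1,N)$ and $0$ otherwise. *)

theory Defs
  imports "HOL-Analysis.Analysis" "Jordan_Normal_Form.Matrix"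
begin

definition vnorm :: "complex vec \<Rightarrow> real" where
  "vnorm x = sqrt (\<Sum>i<dim_vec x. (cmod (x $ i))^2)"

definition spec_norm :: "complex mat \<Rightarrow> real" where
  "spec_norm B = Sup {vnorm (B *\<^sub>v x) | x. x \<in> carrier_vec (dim_col B) \<and> vnorm x = 1}"

definition field_of_values :: "complex mat \<Rightarrow> complex set" where
  "field_of_values B = {(\<Sum>i<dim_row B. cnj (x $ i) * (B *\<^sub>v x) $ i) | x.
      x \<in> carrier_vec (dim_row B) \<and> vnorm x = 1}"

text \<open>Lower block-triangular block-Toeplitz matrix L_m with n x n blocks:
  block (r,s) is A (r-s) if 0 \<le> r-s \<le> min (m-1) N, else 0.\<close>
definition block_toeplitz :: "nat \<Rightarrow> nat \<Rightarrow> nat \<Rightarrow> (nat \<Rightarrow> complex mat) \<Rightarrow> complex mat" where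
  "block_toeplitz n m N A = mat (m*n) (m*n) (\<lambda>(i,j).
      let r = i div n; s = j div n in
      if s \<le> r \<and> r - s \<le> min (m-1) N then A (r - s) $$ (i mod n, j mod n) else 0)"

end

theory Submission
  imports Defs
begin

text \<open>
  Split a unit vector x into blocks x_0, ..., x_(m-1) of length n. Then x^* L_m x is the sum of
  D = sum_r x_r^* A_0 x_r and of the off-diagonal terms x_r^* A_(r-s) x_s with 0 < r - s <= N.
  D is a convex combination, with weights |x_r|^2, of points of F(A_0), hence lies in F(A_0) by
  the Toeplitz-Hausdorff theorem. Each off-diagonal term is at most
  ||A_(r-s)|| |x_r| |x_s| <= ||A_(r-s)|| (|x_r|^2 + |x_s|^2) / 2, and every block row and block
  column meets the diagonal r - s = l at most once, so the off-diagonal part has modulus at most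
  sum_l ||A_l||.
\<close>

text \<open>Vectors and matrices of size n are handled as functions on indices below n.\<close>

definition sesq_form :: "nat \<Rightarrow> (nat \<Rightarrow> nat \<Rightarrow> complex) \<Rightarrow> (nat \<Rightarrow> complex) \<Rightarrow> (nat \<Rightarrow> complex) \<Rightarrow> complex" where
  "sesq_form n M u v = (\<Sum>i<n. cnj (u i) * (\<Sum>j<n. M i j * v j))"

definition sqnorm :: "nat \<Rightarrow> (nat \<Rightarrow> complex) \<Rightarrow> real" where
  "sqnorm n u = (\<Sum>i<n. (cmod (u i))\<^sup>2)"

definition numerical_range :: "nat \<Rightarrow> (nat \<Rightarrow> nat \<Rightarrow> complex) \<Rightarrow> complex set" where
  "numerical_range n M = {sesq_form n M x x | x. sqnorm n x = 1}"

lemma cnj_mult_self: "cnj z * z = (complex_of_real (cmod z))\<^sup>2"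
  by (metis complex_norm_square mult.commute of_real_power)

lemma sesq_form_linear_left:
  "sesq_form n M (\<lambda>i. a * u i + c * v i) w = cnj a * sesq_form n M u w + cnj c * sesq_form n M v w"
  unfolding sesq_form_def by (simp add: algebra_simps sum.distrib sum_distrib_left)

lemma sesq_form_linear_right:
  "sesq_form n M w (\<lambda>i. a * u i + c * v i) = a * sesq_form n M w u + c * sesq_form n M w v"
  unfolding sesq_form_def by (simp add: algebra_simps sum.distrib sum_distrib_left)

lemma sesq_form_cong:
  "(\<And>i j. i < n \<Longrightarrow> j < n \<Longrightarrow> M i j = M' i j) \<Longrightarrow> (\<And>i. i < n \<Longrightarrow> u i = u' i) \<Longrightarrow>
   (\<And>i. i < n \<Longrightarrow> v i = v' i) \<Longrightarrow> sesq_form n M u v = sesq_form n M' u' v'"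
  unfolding sesq_form_def by (intro sum.cong refl arg_cong2[where f = "(*)"]) auto

lemma sesq_form_scale: "sesq_form n M (\<lambda>i. c * u i) (\<lambda>i. c * u i) = (cmod c)\<^sup>2 * sesq_form n M u u"
  using sesq_form_linear_left[of n M c u 0 u] sesq_form_linear_right[of n M _ c u 0 u]
  by (simp add: mult.assoc[symmetric] cnj_mult_self)

lemma sesq_form_matrix_linear:
  "sesq_form n (\<lambda>i j. a * M i j + c * K i j) u v = a * sesq_form n M u v + c * sesq_form n K u v"
  unfolding sesq_form_def by (simp add: algebra_simps sum.distrib sum_distrib_left)

lemma sesq_form_identity: "sesq_form n (\<lambda>i j. if i = j then 1 else 0) u u = sqnorm n u"
proof -
  have "sesq_form n (\<lambda>i j. if i = j then 1 else 0) u u = (\<Sum>i<n. cnj (u i) * u i)"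
    unfolding sesq_form_def by (simp add: if_distrib[where f = "\<lambda>x. x * _"] cong: if_cong)
  also have "\<dots> = sqnorm n u"
    unfolding sqnorm_def by (simp add: cnj_mult_self)
  finally show ?thesis .
qed

lemma sqnorm_cong: "(\<And>i. i < n \<Longrightarrow> u i = u' i) \<Longrightarrow> sqnorm n u = sqnorm n u'"
  unfolding sqnorm_def by (intro sum.cong refl) auto

lemma sqnorm_scale: "sqnorm n (\<lambda>i. c * u i) = (cmod c)\<^sup>2 * sqnorm n u"
  unfolding sqnorm_def by (simp add: norm_mult power_mult_distrib sum_distrib_left)

lemma sqnorm_nonneg: "sqnorm n u \<ge> 0"
  unfolding sqnorm_def by (simp add: sum_nonneg)

lemma sqnorm_eq_0_imp: "sqnorm n u = 0 \<Longrightarrow> i < n \<Longrightarrow> u i = 0"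
  unfolding sqnorm_def by (subst (asm) sum_nonneg_eq_0_iff) auto

lemma sesq_form_zero_left: "(\<And>i. i < n \<Longrightarrow> u i = 0) \<Longrightarrow> sesq_form n M u v = 0"
  unfolding sesq_form_def by simp

lemma sesq_form_normalized_in_numerical_range:
  assumes "sqnorm n y > 0"
  shows "sesq_form n M y y / sqnorm n y \<in> numerical_range n M"
proof -
  define c where "c = complex_of_real (1 / sqrt (sqnorm n y))"
  have c: "(cmod c)\<^sup>2 = 1 / sqnorm n y"
    using assms by (simp add: c_def norm_divide power_divide)
  have "sqnorm n (\<lambda>i. c * y i) = 1"
    using assms by (simp add: sqnorm_scale c)
  moreover have "sesq_form n M (\<lambda>i. c * y i) (\<lambda>i. c * y i) = sesq_form n M y y / sqnorm n y"
    by (simp add: sesq_form_scale c field_simps)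
  ultimately show ?thesis
    unfolding numerical_range_def by (metis (mono_tags, lifting) mem_Collect_eq)
qed

lemma exists_unimodular_real_phase:
  fixes P R :: complex
  obtains u where "cmod u = 1" "Im (cnj u * P + u * R) = 0"
proof
  define d where "d = R - cnj P"
  define u where "u = (if d = 0 then 1 else cnj d / cmod d)"
  show "cmod u = 1"
    by (simp add: u_def norm_divide)
  have "u * d = cmod d"
    by (simp add: u_def cnj_mult_self power2_eq_square)
  moreover have "Im (cnj u * P + u * R) = Im (u * d)"
    by (simp add: d_def algebra_simps)
  ultimately show "Im (cnj u * P + u * R) = 0"
    by simp
qed

lemma sesq_form_attains_intermediate_value:
  assumes x: "sqnorm n x = 1" "sesq_form n M x x = 0"
    and y: "sqnorm n y = 1" "sesq_form n M y y = 1"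
    and b: "0 \<le> b" "b \<le> 1"
  obtains w where "sqnorm n w > 0" "sesq_form n M w w = b * sqnorm n w"
proof -
  \<comment> \<open>After rotating x by the phase u, the form is real along the segment from u x to y,
    so the intermediate value theorem applies to its real part minus b times the squared norm.\<close>
  obtain u where u: "cmod u = 1" "Im (cnj u * sesq_form n M x y + u * sesq_form n M y x) = 0"
    using exists_unimodular_real_phase .
  define C where "C = cnj u * sesq_form n M x y + u * sesq_form n M y x"
  define z where "z = (\<lambda>t::real. \<lambda>i. (of_real (1 - t) * u) * x i + of_real t * y i)"
  have form_z: "sesq_form n M (z t) (z t) = of_real (t * (1 - t)) * C + of_real (t\<^sup>2)" for t
    unfolding z_def sesq_form_linear_left sesq_form_linear_right
    by (simp add: x y u C_def cnj_mult_self algebra_simps power2_eq_square)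
  have form_z_real: "Im (sesq_form n M (z t) (z t)) = 0" for t
    using u(2) by (simp add: form_z C_def)
  define \<phi> where "\<phi> = (\<lambda>t. Re (sesq_form n M (z t) (z t)) - b * sqnorm n (z t))"
  have "continuous_on {0..1} \<phi>"
    unfolding \<phi>_def form_z unfolding z_def sqnorm_def by (intro continuous_intros)
  moreover have "sqnorm n (z 0) = 1"
    by (simp add: z_def sqnorm_scale u x)
  then have "\<phi> 0 \<le> 0"
    using b by (simp add: \<phi>_def form_z)
  moreover have "0 \<le> \<phi> 1"
    using b y by (simp add: \<phi>_def form_z z_def)
  ultimately obtain t where t: "0 \<le> t" "t \<le> 1" "\<phi> t = 0"
    using IVT'[of \<phi> 0 0 1] by auto
  have "sqnorm n (z t) > 0"
  proof (rule ccontr)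
    assume "\<not> sqnorm n (z t) > 0"
    then have zt: "sqnorm n (z t) = 0"
      using sqnorm_nonneg[of n "z t"] by linarith
    with \<open>sqnorm n (z 0) = 1\<close> have "t \<noteq> 0"
      by auto
    define c where "c = - (of_real (1 - t) * u) / of_real t"
    have "y i = c * x i" if "i < n" for i
      using sqnorm_eq_0_imp[OF zt that] \<open>t \<noteq> 0\<close>
      unfolding z_def c_def by (simp add: field_simps add_eq_0_iff)
    then have "sesq_form n M y y = (cmod c)\<^sup>2 * sesq_form n M x x"
      by (simp add: sesq_form_cong[of n M M y "\<lambda>i. c * x i" y "\<lambda>i. c * x i"] sesq_form_scale)
    then show False
      using x y by simp
  qed
  moreover have "sesq_form n M (z t) (z t) = b * sqnorm n (z t)"
    using t(3) form_z_real[of t] by (simp add: \<phi>_def complex_eq_iff)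
  ultimately show thesis
    using that by blast
qed

lemma convex_numerical_range: "convex (numerical_range n M)"
  unfolding convex_def
proof (intro ballI allI impI)
  fix p q :: complex and a b :: real
  assume "p \<in> numerical_range n M" "q \<in> numerical_range n M" and ab: "0 \<le> a" "0 \<le> b" "a + b = 1"
  then obtain x y where x: "sqnorm n x = 1" "p = sesq_form n M x x"
    and y: "sqnorm n y = 1" "q = sesq_form n M y y"
    unfolding numerical_range_def by auto
  show "a *\<^sub>R p + b *\<^sub>R q \<in> numerical_range n M"
  proof (cases "p = q")
    case True
    then have "a *\<^sub>R p + b *\<^sub>R q = (a + b) *\<^sub>R p"
      by (simp add: scaleR_left_distrib)
    also have "\<dots> = p"
      by (simp only: ab(3) scaleR_one)
    finally show ?thesis
      using x unfolding numerical_range_def by blast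
  next
    case False
    define g where "g = q - p"
    \<comment> \<open>M' = (M - p I) / (q - p) has the values 0 at x and 1 at y.\<close>
    define M' where "M' = (\<lambda>i j. (1 / g) * M i j + (- p / g) * (if i = j then 1 else 0))"
    have M': "sesq_form n M' w w = (sesq_form n M w w - p * sqnorm n w) / g" for w
      unfolding M'_def sesq_form_matrix_linear sesq_form_identity by (simp add: diff_divide_distrib)
    have "g \<noteq> 0"
      using False by (simp add: g_def)
    then obtain w where w: "sqnorm n w > 0" "sesq_form n M' w w = b * sqnorm n w"
      using sesq_form_attains_intermediate_value[of n x M' y b] x y ab by (auto simp: M' g_def)
    then have "sesq_form n M w w / sqnorm n w = p + b * g"
      using \<open>g \<noteq> 0\<close> by (simp add: M' field_simps)
    also have "\<dots> = a *\<^sub>R p + b *\<^sub>R q"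
    proof -
      have "a = 1 - b"
        using ab by simp
      then show ?thesis
        by (simp only:) (simp add: g_def scaleR_conv_of_real algebra_simps)
    qed
    finally show ?thesis
      using sesq_form_normalized_in_numerical_range[OF w(1)] by metis
  qed
qed

lemma sum_sesq_form_in_numerical_range:
  assumes "finite I" "(\<Sum>r\<in>I. sqnorm n (u r)) = 1"
  shows "(\<Sum>r\<in>I. sesq_form n M (u r) (u r)) \<in> numerical_range n M"
proof -
  define S where "S = {r \<in> I. sqnorm n (u r) > 0}"
  have null: "sqnorm n (u r) = 0" if "r \<in> I - S" for r
    using that sqnorm_nonneg[of n "u r"] by (auto simp: S_def)
  have "sesq_form n M (u r) (u r) = 0" if "r \<in> I - S" for r
    using null[OF that] by (intro sesq_form_zero_left sqnorm_eq_0_imp)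
  then have "(\<Sum>r\<in>I. sesq_form n M (u r) (u r)) = (\<Sum>r\<in>S. sesq_form n M (u r) (u r))"
    by (intro sum.mono_neutral_right) (use assms(1) in \<open>auto simp: S_def\<close>)
  also have "\<dots> = (\<Sum>r\<in>S. sqnorm n (u r) *\<^sub>R (sesq_form n M (u r) (u r) / sqnorm n (u r)))"
    by (intro sum.cong refl) (simp add: S_def scaleR_conv_of_real)
  also have "\<dots> \<in> numerical_range n M"
  proof (rule convex_sum[OF _ convex_numerical_range])
    have "(\<Sum>r\<in>S. sqnorm n (u r)) = (\<Sum>r\<in>I. sqnorm n (u r))"
      by (rule sum.mono_neutral_left) (use assms(1) null in \<open>auto simp: S_def\<close>)
    then show "(\<Sum>r\<in>S. sqnorm n (u r)) = 1"
      using assms(2) by simp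
  qed (use assms(1) sesq_form_normalized_in_numerical_range in \<open>auto simp: S_def\<close>)
  finally show ?thesis .
qed

lemma cmod_sum_mult_le:
  fixes a b :: "'i \<Rightarrow> complex"
  shows "cmod (\<Sum>i\<in>I. a i * b i) \<le> sqrt (\<Sum>i\<in>I. (cmod (a i))\<^sup>2) * sqrt (\<Sum>i\<in>I. (cmod (b i))\<^sup>2)"
proof -
  have "cmod (\<Sum>i\<in>I. a i * b i) \<le> (\<Sum>i\<in>I. cmod (a i) * cmod (b i))"
    by (metis (no_types, lifting) norm_mult norm_sum sum.cong)
  also have "\<dots> = sqrt ((\<Sum>i\<in>I. cmod (a i) * cmod (b i))\<^sup>2)"
    by (simp add: sum_nonneg)
  also have "\<dots> \<le> sqrt ((\<Sum>i\<in>I. (cmod (a i))\<^sup>2) * (\<Sum>i\<in>I. (cmod (b i))\<^sup>2))"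
    by (rule real_sqrt_le_mono, rule Cauchy_Schwarz_ineq_sum)
  finally show ?thesis
    by (simp add: real_sqrt_mult)
qed

lemma vnorm_sqnorm: "x \<in> carrier_vec n \<Longrightarrow> vnorm x = sqrt (sqnorm n (($) x))"
  unfolding vnorm_def sqnorm_def by simp

lemma vnorm_smult: "vnorm (c \<cdot>\<^sub>v x) = cmod c * vnorm x"
  unfolding vnorm_def
  by (simp add: norm_mult power_mult_distrib sum_distrib_left[symmetric] real_sqrt_mult)

lemma mult_mat_vec_nth:
  "B \<in> carrier_mat n n \<Longrightarrow> x \<in> carrier_vec n \<Longrightarrow> i < n \<Longrightarrow> (B *\<^sub>v x) $ i = (\<Sum>j<n. B $$ (i, j) * x $ j)"
  by (simp add: scalar_prod_def atLeast0LessThan)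

lemma spec_norm_bdd:
  assumes B: "B \<in> carrier_mat n n"
  shows "bdd_above {vnorm (B *\<^sub>v x) | x. x \<in> carrier_vec (dim_col B) \<and> vnorm x = 1}"
proof (rule bdd_aboveI)
  fix r assume "r \<in> {vnorm (B *\<^sub>v x) | x. x \<in> carrier_vec (dim_col B) \<and> vnorm x = 1}"
  then obtain x where x: "x \<in> carrier_vec n" "vnorm x = 1" and r: "r = vnorm (B *\<^sub>v x)"
    using B by auto
  have "(cmod ((B *\<^sub>v x) $ i))\<^sup>2 \<le> (\<Sum>j<n. (cmod (B $$ (i, j)))\<^sup>2)" if "i < n" for i
  proof -
    have "cmod ((B *\<^sub>v x) $ i) \<le> sqrt (\<Sum>j<n. (cmod (B $$ (i, j)))\<^sup>2) * vnorm x"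
      unfolding mult_mat_vec_nth[OF B x(1) that] vnorm_sqnorm[OF x(1)] sqnorm_def
      by (rule cmod_sum_mult_le)
    then show ?thesis
      using x(2) by (metis mult_cancel_left1 mult.commute norm_ge_zero power_mono real_sqrt_pow2
          sum_nonneg zero_le_power2)
  qed
  then show "r \<le> sqrt (\<Sum>i<n. \<Sum>j<n. (cmod (B $$ (i, j)))\<^sup>2)"
    unfolding r vnorm_sqnorm[OF mult_mat_vec_carrier[OF B x(1)]] sqnorm_def
    by (intro real_sqrt_le_mono sum_mono) auto
qed

lemma vnorm_le_spec_norm:
  assumes "B \<in> carrier_mat n n" "x \<in> carrier_vec n" "vnorm x = 1"
  shows "vnorm (B *\<^sub>v x) \<le> spec_norm B"
  unfolding spec_norm_def by (rule cSup_upper[OF _ spec_norm_bdd]) (use assms in auto)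

lemma vnorm_mult_le_spec_norm:
  assumes B: "B \<in> carrier_mat n n" and x: "x \<in> carrier_vec n"
  shows "vnorm (B *\<^sub>v x) \<le> spec_norm B * vnorm x"
proof (cases "vnorm x = 0")
  case True
  then have "x = 0\<^sub>v n"
    using sqnorm_eq_0_imp x by (intro eq_vecI) (auto simp: vnorm_sqnorm)
  then have "vnorm (B *\<^sub>v x) = 0"
    using B by (simp add: vnorm_def)
  then show ?thesis
    using True by simp
next
  case False
  then have pos: "vnorm x > 0"
    by (simp add: vnorm_def order_less_le sum_nonneg)
  define y where "y = (1 / vnorm x) \<cdot>\<^sub>v x"
  have "vnorm (B *\<^sub>v x) / vnorm x = vnorm (B *\<^sub>v y)"
    using B x pos by (simp add: y_def mult_mat_vec vnorm_smult norm_divide)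
  also have "\<dots> \<le> spec_norm B"
    using B x pos by (intro vnorm_le_spec_norm) (auto simp: y_def vnorm_smult norm_divide)
  finally show ?thesis
    using pos by (simp add: divide_le_eq mult.commute)
qed

lemma spec_norm_nonneg:
  assumes "B \<in> carrier_mat n n" "0 < n"
  shows "0 \<le> spec_norm B"
proof -
  have "vnorm (unit_vec n 0) = 1"
    using assms(2) by (simp add: vnorm_def unit_vec_def if_distrib[where f = "\<lambda>x. (cmod x)\<^sup>2"] cong: if_cong)
  then have "vnorm (B *\<^sub>v unit_vec n 0) \<le> spec_norm B"
    using assms(1) by (intro vnorm_le_spec_norm) auto
  moreover have "0 \<le> vnorm (B *\<^sub>v unit_vec n 0)"
    by (simp add: vnorm_def sum_nonneg)
  ultimately show ?thesis
    by linarith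
qed

lemma sesq_form_le_spec_norm:
  assumes B: "B \<in> carrier_mat n n"
  shows "cmod (sesq_form n (\<lambda>i j. B $$ (i, j)) u v) \<le> spec_norm B * sqrt (sqnorm n u) * sqrt (sqnorm n v)"
proof -
  have v: "vec n v \<in> carrier_vec n"
    by simp
  have "sesq_form n (\<lambda>i j. B $$ (i, j)) u v = (\<Sum>i<n. cnj (u i) * (B *\<^sub>v vec n v) $ i)"
    unfolding sesq_form_def by (intro sum.cong refl) (simp add: mult_mat_vec_nth[OF B v])
  then have "cmod (sesq_form n (\<lambda>i j. B $$ (i, j)) u v) \<le> sqrt (sqnorm n u) * vnorm (B *\<^sub>v vec n v)"
    using cmod_sum_mult_le[of "\<lambda>i. cnj (u i)"] B by (simp add: sqnorm_def vnorm_def)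
  also have "\<dots> \<le> sqrt (sqnorm n u) * (spec_norm B * vnorm (vec n v))"
    by (intro mult_left_mono vnorm_mult_le_spec_norm[OF B v]) (simp add: sqnorm_nonneg)
  also have "vnorm (vec n v) = sqrt (sqnorm n v)"
    by (simp add: vnorm_def sqnorm_def)
  finally show ?thesis
    by (simp add: algebra_simps)
qed

lemma field_of_values_eq_numerical_range:
  assumes B: "B \<in> carrier_mat n n"
  shows "field_of_values B = numerical_range n (\<lambda>i j. B $$ (i, j))"
proof -
  have "(\<Sum>i<n. cnj (x $ i) * (B *\<^sub>v x) $ i) = sesq_form n (\<lambda>i j. B $$ (i, j)) (($) x) (($) x)"
    if "x \<in> carrier_vec n" for x
    unfolding sesq_form_def by (intro sum.cong refl) (simp add: mult_mat_vec_nth[OF B that])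
  moreover have "sqnorm n (($) x) = 1 \<longleftrightarrow> vnorm x = 1" if "x \<in> carrier_vec n" for x
    using that by (simp add: vnorm_sqnorm)
  moreover have "sesq_form n (\<lambda>i j. B $$ (i, j)) (($) (vec n f)) (($) (vec n f)) = sesq_form n (\<lambda>i j. B $$ (i, j)) f f"
    and "sqnorm n (($) (vec n f)) = sqnorm n f" for f
    by (auto intro: sesq_form_cong sqnorm_cong)
  ultimately show ?thesis
    unfolding field_of_values_def numerical_range_def using B
    by auto (metis vec_carrier)
qed

lemma sum_lessThan_mult:
  fixes f :: "nat \<Rightarrow> 'a::comm_monoid_add"
  shows "(\<Sum>i<m * n. f i) = (\<Sum>r<m. \<Sum>j<n. f (r * n + j))"
proof -
  have "(\<Sum>i<m * n. f i) = (\<Sum>r<m. sum f {r * n..<r * n + n})"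
    using sum.nat_group[of f n m] by simp
  also have "\<dots> = (\<Sum>r<m. \<Sum>j<n. f (r * n + j))"
  proof (rule sum.cong[OF refl])
    fix r
    have "sum f {0 + r * n..<n + r * n} = (\<Sum>j\<in>{0..<n}. f (j + r * n))"
      by (rule sum.shift_bounds_nat_ivl)
    then show "sum f {r * n..<r * n + n} = (\<Sum>j<n. f (r * n + j))"
      by (simp add: atLeast0LessThan add.commute)
  qed
  finally show ?thesis .
qed

lemma sqnorm_blocks: "sqnorm (m * n) x = (\<Sum>r<m. sqnorm n (\<lambda>j. x (r * n + j)))"
  unfolding sqnorm_def by (rule sum_lessThan_mult)

lemma sesq_form_blocks:
  "sesq_form (m * n) M u v =
     (\<Sum>r<m. \<Sum>s<m. sesq_form n (\<lambda>j k. M (r * n + j) (s * n + k)) (\<lambda>j. u (r * n + j)) (\<lambda>k. v (s * n + k)))"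
proof -
  have "sesq_form (m * n) M u v =
      (\<Sum>r<m. \<Sum>j<n. \<Sum>s<m. cnj (u (r * n + j)) * (\<Sum>k<n. M (r * n + j) (s * n + k) * v (s * n + k)))"
    unfolding sesq_form_def by (simp only: sum_lessThan_mult sum_distrib_left)
  also have "\<dots> = (\<Sum>r<m. \<Sum>s<m. \<Sum>j<n. cnj (u (r * n + j)) * (\<Sum>k<n. M (r * n + j) (s * n + k) * v (s * n + k)))"
    by (rule sum.cong[OF refl], rule sum.swap)
  finally show ?thesis
    unfolding sesq_form_def .
qed

lemma block_toeplitz_nth:
  assumes "r < m" "s < m" "j < n" "k < n"
  shows "block_toeplitz n m N A $$ (r * n + j, s * n + k) = (if s \<le> r \<and> r - s \<le> N then A (r - s) $$ (j, k) else 0)"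
proof -
  have "r * n + j < m * n" if "r < m" "j < n" for r j
  proof -
    have "r * n + j < Suc r * n"
      using that by simp
    also have "\<dots> \<le> m * n"
      using that by (intro mult_right_mono) auto
    finally show ?thesis .
  qed
  moreover have "(s \<le> r \<and> r - s \<le> min (m - 1) N) = (s \<le> r \<and> r - s \<le> N)"
    using assms by auto
  ultimately show ?thesis
    using assms unfolding block_toeplitz_def by (simp add: Let_def)
qed

lemma sesq_form_block_toeplitz:
  fixes x :: "nat \<Rightarrow> complex" and n :: nat
  defines "u \<equiv> \<lambda>r j. x (r * n + j)"
  shows "sesq_form (m * n) (\<lambda>i j. block_toeplitz n m N A $$ (i, j)) x x =
     (\<Sum>r<m. sesq_form n (\<lambda>j k. A 0 $$ (j, k)) (u r) (u r)) +
     (\<Sum>r<m. \<Sum>s<m. if s < r \<and> r - s \<le> N then sesq_form n (\<lambda>j k. A (r - s) $$ (j, k)) (u r) (u s) else 0)"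
proof -
  define T where "T r s = sesq_form n (\<lambda>j k. A (r - s) $$ (j, k)) (u r) (u s)" for r s
  have block: "sesq_form n (\<lambda>j k. block_toeplitz n m N A $$ (r * n + j, s * n + k)) (\<lambda>j. x (r * n + j)) (\<lambda>k. x (s * n + k))
      = (if s = r then T r r else 0) + (if s < r \<and> r - s \<le> N then T r s else 0)"
    if "r < m" "s < m" for r s
  proof -
    have "sesq_form n (\<lambda>j k. block_toeplitz n m N A $$ (r * n + j, s * n + k)) (\<lambda>j. x (r * n + j)) (\<lambda>k. x (s * n + k))
        = sesq_form n (\<lambda>j k. if s \<le> r \<and> r - s \<le> N then A (r - s) $$ (j, k) else 0) (u r) (u s)"
      using that by (intro sesq_form_cong) (simp_all add: block_toeplitz_nth u_def)
    also have "\<dots> = (if s \<le> r \<and> r - s \<le> N then T r s else 0)"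
      by (auto simp: T_def sesq_form_def)
    finally show ?thesis
      by auto
  qed
  have "sesq_form (m * n) (\<lambda>i j. block_toeplitz n m N A $$ (i, j)) x x =
      (\<Sum>r<m. \<Sum>s<m. (if s = r then T r r else 0) + (if s < r \<and> r - s \<le> N then T r s else 0))"
    unfolding sesq_form_blocks by (intro sum.cong refl) (simp add: block)
  also have "\<dots> = (\<Sum>r<m. T r r + (\<Sum>s<m. if s < r \<and> r - s \<le> N then T r s else 0))"
    by (intro sum.cong refl) (simp add: sum.distrib)
  finally show ?thesis
    unfolding T_def by (simp add: sum.distrib)
qed

lemma sum_inj_image_le:
  fixes c :: "nat \<Rightarrow> real"
  assumes "finite P" "inj_on g P" "g ` P \<subseteq> {1..N}" "\<And>l. l \<in> {1..N} \<Longrightarrow> 0 \<le> c l"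
  shows "(\<Sum>x\<in>P. c (g x)) \<le> (\<Sum>l=1..N. c l)"
proof -
  have "(\<Sum>x\<in>P. c (g x)) = (\<Sum>l\<in>g ` P. c l)"
    using sum.reindex[OF assms(2), of c] by simp
  also have "\<dots> \<le> (\<Sum>l=1..N. c l)"
    by (rule sum_mono2) (use assms in auto)
  finally show ?thesis .
qed

lemma norm_toeplitz_sum_le:
  fixes f :: "nat \<Rightarrow> nat \<Rightarrow> complex" and a c :: "nat \<Rightarrow> real"
  assumes f: "\<And>r s. s < r \<Longrightarrow> r - s \<le> N \<Longrightarrow> cmod (f r s) \<le> c (r - s) * sqrt (a r) * sqrt (a s)"
    and a: "\<And>r. 0 \<le> a r" and c: "\<And>l. l \<in> {1..N} \<Longrightarrow> 0 \<le> c l"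
  shows "cmod (\<Sum>r<m. \<Sum>s<m. if s < r \<and> r - s \<le> N then f r s else 0) \<le> (\<Sum>l=1..N. c l) * (\<Sum>r<m. a r)"
proof -
  define K where "K = (\<Sum>l=1..N. c l)"
  define U where "U r s = (if s < r \<and> r - s \<le> N then c (r - s) else 0)" for r s
  have entry: "cmod (if s < r \<and> r - s \<le> N then f r s else 0) \<le> U r s * (a r + a s) / 2" for r s
  proof (cases "s < r \<and> r - s \<le> N")
    case True
    have "cmod (f r s) \<le> c (r - s) * sqrt (a r * a s)"
      using f True by (simp add: real_sqrt_mult mult.assoc)
    also have "\<dots> \<le> c (r - s) * ((a r + a s) / 2)"
      using True by (intro mult_left_mono arith_geo_mean_sqrt a c) auto
    finally show ?thesis
      using True by (simp add: U_def)
  next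
    case False
    then show ?thesis
      by (auto simp: U_def)
  qed
  have rows: "(\<Sum>s<m. U r s) \<le> K" for r
  proof -
    have "(\<Sum>s<m. U r s) = (\<Sum>s\<in>{s. s < m \<and> s < r \<and> r - s \<le> N}. c (r - s))"
      by (simp add: U_def sum.inter_filter[symmetric])
    also have "\<dots> \<le> K"
      unfolding K_def by (rule sum_inj_image_le) (auto simp: inj_on_def c)
    finally show ?thesis .
  qed
  have cols: "(\<Sum>r<m. U r s) \<le> K" for s
  proof -
    have "(\<Sum>r<m. U r s) = (\<Sum>r\<in>{r. r < m \<and> s < r \<and> r - s \<le> N}. c (r - s))"
      by (simp add: U_def sum.inter_filter[symmetric])
    also have "\<dots> \<le> K"
      unfolding K_def by (rule sum_inj_image_le) (auto simp: inj_on_def c)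
    finally show ?thesis .
  qed
  have "cmod (\<Sum>r<m. \<Sum>s<m. if s < r \<and> r - s \<le> N then f r s else 0) \<le> (\<Sum>r<m. \<Sum>s<m. U r s * (a r + a s) / 2)"
    by (rule order_trans[OF norm_sum sum_mono[OF order_trans[OF norm_sum sum_mono[OF entry]]]])
  also have "\<dots> = ((\<Sum>r<m. \<Sum>s<m. a r * U r s) + (\<Sum>r<m. \<Sum>s<m. a s * U r s)) / 2"
    by (simp add: sum.distrib sum_divide_distrib[symmetric] distrib_left mult.commute)
  also have "(\<Sum>r<m. \<Sum>s<m. a s * U r s) = (\<Sum>s<m. \<Sum>r<m. a s * U r s)"
    by (rule sum.swap)
  also have "((\<Sum>r<m. \<Sum>s<m. a r * U r s) + (\<Sum>s<m. \<Sum>r<m. a s * U r s)) / 2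
      = ((\<Sum>r<m. a r * (\<Sum>s<m. U r s)) + (\<Sum>s<m. a s * (\<Sum>r<m. U r s))) / 2"
    by (simp add: sum_distrib_left)
  also have "\<dots> \<le> ((\<Sum>r<m. a r * K) + (\<Sum>s<m. a s * K)) / 2"
    by (intro divide_right_mono add_mono sum_mono mult_left_mono rows cols a) simp_all
  also have "\<dots> = K * (\<Sum>r<m. a r)"
    by (simp add: sum_distrib_right[symmetric])
  finally show ?thesis
    unfolding K_def .
qed

theorem mainTheorem8:
  fixes n m N :: nat and A :: "nat \<Rightarrow> complex mat"
  assumes "m \<ge> 1"
    and "\<And>l. l \<le> N \<Longrightarrow> A l \<in> carrier_mat n n"
  shows "field_of_values (block_toeplitz n m N A) \<subseteq>
           {z. infdist z (field_of_values (A 0)) \<le> (\<Sum>l=1..N. spec_norm (A l))}"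
proof
  fix z assume "z \<in> field_of_values (block_toeplitz n m N A)"
  moreover have "block_toeplitz n m N A \<in> carrier_mat (m * n) (m * n)"
    by (simp add: block_toeplitz_def)
  ultimately have "z \<in> numerical_range (m * n) (\<lambda>i j. block_toeplitz n m N A $$ (i, j))"
    by (simp add: field_of_values_eq_numerical_range)
  then obtain x where x: "sqnorm (m * n) x = 1"
    and z: "z = sesq_form (m * n) (\<lambda>i j. block_toeplitz n m N A $$ (i, j)) x x"
    unfolding numerical_range_def by auto
  have "0 < n"
    using x by (rule contrapos_pp) (simp add: sqnorm_def)
  define u where "u = (\<lambda>r j. x (r * n + j))"
  define D where "D = (\<Sum>r<m. sesq_form n (\<lambda>j k. A 0 $$ (j, k)) (u r) (u r))"
  define E where "E = (\<Sum>r<m. \<Sum>s<m. if s < r \<and> r - s \<le> N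
      then sesq_form n (\<lambda>j k. A (r - s) $$ (j, k)) (u r) (u s) else 0)"
  have "z = D + E"
    unfolding z D_def E_def u_def by (rule sesq_form_block_toeplitz)
  have weights: "(\<Sum>r<m. sqnorm n (u r)) = 1"
    using x by (simp add: sqnorm_blocks u_def)
  have "D \<in> field_of_values (A 0)"
    unfolding D_def field_of_values_eq_numerical_range[OF assms(2)[OF le0]]
    by (rule sum_sesq_form_in_numerical_range[OF _ weights]) simp
  moreover have "cmod E \<le> (\<Sum>l=1..N. spec_norm (A l))"
    using norm_toeplitz_sum_le[of N _ "\<lambda>l. spec_norm (A l)" "\<lambda>r. sqnorm n (u r)" m]
      sesq_form_le_spec_norm[OF assms(2)] spec_norm_nonneg[OF assms(2) \<open>0 < n\<close>]
    unfolding E_def weights by (simp add: sqnorm_nonneg)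
  ultimately show "z \<in> {z. infdist z (field_of_values (A 0)) \<le> (\<Sum>l=1..N. spec_norm (A l))}"
    using infdist_le[of D "field_of_values (A 0)" z] by (simp add: \<open>z = D + E\<close> dist_norm)
qed

end
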